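(* Fix a prompt $q$ and a policy $\pi_k$, and assume $1-\rho^+(q)-\rho^-(q)\neq 0$. Let $n\ge2$ and let $(o_i,\xi_i)_{i=1}^n$ be i.i.d. with $o_i\sim\pi_k(\cdot\mid q)$ and $\xi_i\sim U[0,1]$ independent of $o_i$. Let $\hat r_i=\hat r(q,o_i,\xi_i)$, $\bar r(q)=\frac1n\sum_{i=1}^n\hat r_i$, $\widehat{\mathrm{Var}}=\frac1{n-1}\sum_{i=1}^n(\hat r_i-\bar r(q))^2$, and \[ Z=\widehat{\mathrm{Var}}-\frac{\bar r(q)\,\rho^-(q)(1-\rho^-(q))}{(1-\rho^+(q)-\rho^-(q))^2}-\frac{(1-\bar r(q))\,\rho^+(q)(1-\rho^+(q))}{(1-\rho^+(q)-\rho^-(q))^2}. \] Then $\mathbb E[Z]=p_{\pi_k}(q)(1-p_{\pi_k}(q))=\mathrm{Var}_{o\sim\pi_k(\cdot\mid q)}(r^*(q,o))$, and $Z\to p_{\pi_k}(q)(1-p_{\pi_k}(q))$ almost surely as $n\to\infty$ (i.e. $Z$ is an unbiased and consistent estimator of the true reward variance).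
   Context: Setting: $\mathcal O$ is a countable set of responses; $r^*:\mathcal Q\times\mathcal O\to\{0,1\}$ is the true binary reward; $p_\pi(q)=\mathbb E_{o\sim\pi(\cdot\mid q)}[r^*(q,o)]$. Noise model: flip rates $\rho^+(q),\rho^-(q)\in[0,1]$; for $\xi\in[0,1]$ the observed reward is $\tilde r(q,o,\xi)=(1-r^*(q,o))\mathbf 1_{\{\xi\le\rho^+(q)\}}+r^*(q,o)\mathbf 1_{\{\xi\le 1-\rho^-(q)\}}$. The corrected reward is $\hat r(q,o,\xi)=\dfrac{\tilde r(q,o,\xi)-\rho^+(q)}{1-\rho^+(q)-\rho^-(q)}$. *)

theory Defs
  imports "HOL-Probability.Probability"
begin

text \<open>Noisy observed reward: rs is the true binary reward r*, rp = rho^+, rm = rho^-.\<close>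
definition noisy_reward ::
  "('q \<Rightarrow> 'o \<Rightarrow> real) \<Rightarrow> ('q \<Rightarrow> real) \<Rightarrow> ('q \<Rightarrow> real) \<Rightarrow> 'q \<Rightarrow> 'o \<Rightarrow> real \<Rightarrow> real" where
  "noisy_reward rs rp rm q x \<xi> =
     (1 - rs q x) * (if \<xi> \<le> rp q then 1 else 0) + rs q x * (if \<xi> \<le> 1 - rm q then 1 else 0)"

definition corrected_reward ::
  "('q \<Rightarrow> 'o \<Rightarrow> real) \<Rightarrow> ('q \<Rightarrow> real) \<Rightarrow> ('q \<Rightarrow> real) \<Rightarrow> 'q \<Rightarrow> 'o \<Rightarrow> real \<Rightarrow> real" where
  "corrected_reward rs rp rm q x \<xi> =
     (noisy_reward rs rp rm q x \<xi> - rp q) / (1 - rp q - rm q)"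

definition p_pol :: "('q \<Rightarrow> 'o \<Rightarrow> real) \<Rightarrow> ('q \<Rightarrow> 'o pmf) \<Rightarrow> 'q \<Rightarrow> real" where
  "p_pol rs \<pi> q = measure_pmf.expectation (\<pi> q) (\<lambda>x. rs q x)"

text \<open>The estimator Z computed from the first n samples (indices 0..n-1) of the
  sequences os (responses) and xs (uniform variables).\<close>
definition Z_est ::
  "('q \<Rightarrow> 'o \<Rightarrow> real) \<Rightarrow> ('q \<Rightarrow> real) \<Rightarrow> ('q \<Rightarrow> real) \<Rightarrow> 'q \<Rightarrow> nat \<Rightarrow> (nat \<Rightarrow> 'o) \<Rightarrow> (nat \<Rightarrow> real) \<Rightarrow> real" where
  "Z_est rs rp rm q n os xs =
     (let rh = (\<lambda>i. corrected_reward rs rp rm q (os i) (xs i));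
          rbar = (\<Sum>i<n. rh i) / real n;
          vhat = (\<Sum>i<n. (rh i - rbar)^2) / (real n - 1);
          d = (1 - rp q - rm q)^2
      in vhat - rbar * rm q * (1 - rm q) / d - (1 - rbar) * rp q * (1 - rp q) / d)"

end

theory Submission
  imports Defs "HOL-Real_Asymp.Real_Asymp"
begin

text \<open>Given the response \<open>o\<close>, the observed reward is the indicator of \<open>\<xi> \<le> \<theta>\<close> with
  \<open>\<theta> = 1 - \<rho>\<^sup>-\<close> if \<open>r\<^sup>* = 1\<close> and \<open>\<theta> = \<rho>\<^sup>+\<close> otherwise. Hence the corrected reward has
  conditional mean \<open>r\<^sup>*\<close> and conditional variance \<open>v(r\<^sup>*)\<close>, where \<open>v\<close> is affine, so
  \<open>E r\<^sub>i = p\<close> and \<open>E r\<^sub>i\<^sup>2 = p + v(p)\<close>. The sample variance of i.i.d. variables is unbiased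
  for their variance \<open>p + v(p) - p\<^sup>2\<close> and the sample mean for \<open>p\<close>; since \<open>v\<close> is affine,
  \<open>E Z = p (1 - p)\<close>. The corrected rewards are bounded, so by Hoeffding's inequality and
  Borel--Cantelli the sample means of \<open>r\<^sub>i\<close> and \<open>r\<^sub>i\<^sup>2\<close> converge almost surely, and \<open>Z\<close>
  is a continuous function of them.\<close>

definition sample_mean :: "nat \<Rightarrow> (nat \<Rightarrow> real) \<Rightarrow> real" where
  "sample_mean n x = (\<Sum>i<n. x i) / real n"

definition sample_variance :: "nat \<Rightarrow> (nat \<Rightarrow> real) \<Rightarrow> real" where
  "sample_variance n x = (\<Sum>i<n. (x i - sample_mean n x)\<^sup>2) / (real n - 1)"

lemma sample_variance_eq:
  "sample_variance n x = ((\<Sum>i<n. (x i)\<^sup>2) - (\<Sum>i<n. x i)\<^sup>2 / real n) / (real n - 1)"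
proof (cases "n = 0")
  case False
  define m where "m = sample_mean n x"
  have sum_x: "(\<Sum>i<n. x i) = real n * m"
    using False by (simp add: m_def sample_mean_def)
  have "(\<Sum>i<n. (x i - m)\<^sup>2) = (\<Sum>i<n. (x i)\<^sup>2) - 2 * m * (\<Sum>i<n. x i) + real n * m\<^sup>2"
    by (simp add: power2_diff sum.distrib sum_subtractf sum_distrib_left algebra_simps)
  also have "\<dots> = (\<Sum>i<n. (x i)\<^sup>2) - (\<Sum>i<n. x i)\<^sup>2 / real n"
    using False by (simp add: sum_x power2_eq_square)
  finally show ?thesis
    by (simp add: sample_variance_def m_def)
qed (simp add: sample_variance_def)

lemma sample_variance_eq_double_sum:
  "sample_variance n x = ((\<Sum>i<n. x i * x i) - (\<Sum>i<n. \<Sum>j<n. x i * x j) / real n) / (real n - 1)"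
  by (simp add: sample_variance_eq power2_eq_square sum_product)

lemma sample_variance_eq_mean_squares:
  "sample_variance n x =
     real n / (real n - 1) * (sample_mean n (\<lambda>i. (x i)\<^sup>2) - (sample_mean n x)\<^sup>2)"
proof (cases "n = 0")
  case False
  have "real n * (sample_mean n (\<lambda>i. (x i)\<^sup>2) - (sample_mean n x)\<^sup>2)
      = (\<Sum>i<n. (x i)\<^sup>2) - (\<Sum>i<n. x i)\<^sup>2 / real n"
    using False by (simp add: sample_mean_def field_simps power2_eq_square)
  then show ?thesis
    by (simp add: sample_variance_eq)
qed (simp add: sample_variance_def)

lemma tendsto_sample_variance:
  assumes "(\<lambda>n. sample_mean n x) \<longlonglongrightarrow> \<mu>"
    and "(\<lambda>n. sample_mean n (\<lambda>i. (x i)\<^sup>2)) \<longlonglongrightarrow> m2"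
  shows "(\<lambda>n. sample_variance n x) \<longlonglongrightarrow> m2 - \<mu>\<^sup>2"
proof -
  have "(\<lambda>n. real n / (real n - 1)) \<longlonglongrightarrow> 1"
    by real_asymp
  then have "(\<lambda>n. real n / (real n - 1) * (sample_mean n (\<lambda>i. (x i)\<^sup>2) - (sample_mean n x)\<^sup>2))
      \<longlonglongrightarrow> 1 * (m2 - \<mu>\<^sup>2)"
    by (intro tendsto_intros assms)
  then show ?thesis
    by (simp add: sample_variance_eq_mean_squares)
qed

lemma (in prob_space) variance_binary:
  fixes f :: "'a \<Rightarrow> real"
  assumes [measurable]: "f \<in> borel_measurable M" and binary: "\<And>\<omega>. \<omega> \<in> space M \<Longrightarrow> f \<omega> \<in> {0, 1}"
  shows "variance f = expectation f * (1 - expectation f)"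
proof -
  have integrable: "integrable M f" "integrable M (\<lambda>\<omega>. (f \<omega>)\<^sup>2)"
    by (rule integrable_const_bound[where B = 1]; auto intro!: AE_I2 dest: binary)+
  have square: "\<And>\<omega>. \<omega> \<in> space M \<Longrightarrow> (f \<omega>)\<^sup>2 = f \<omega>"
    by (auto dest: binary)
  have "variance f = expectation (\<lambda>\<omega>. (f \<omega>)\<^sup>2) - (expectation f)\<^sup>2"
    using integrable by (rule variance_eq)
  also have "expectation (\<lambda>\<omega>. (f \<omega>)\<^sup>2) = expectation f"
    by (rule Bochner_Integration.integral_cong[OF refl square])
  finally show ?thesis
    by (simp add: power2_eq_square algebra_simps)
qed

locale iid_sequence = prob_space M
  for M :: "'w measure" and N :: "'a measure" and W :: "nat \<Rightarrow> 'w \<Rightarrow> 'a" and P :: "'a measure" +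
  assumes indep: "indep_vars (\<lambda>_. N) W UNIV"
    and law: "\<And>i. distr M N (W i) = P"
begin

lemma measurable_W [measurable]: "W i \<in> measurable M N"
  using indep by (auto simp: indep_vars_def)

context
  fixes g :: "'a \<Rightarrow> real" and K :: real
  assumes g [measurable]: "g \<in> borel_measurable N"
    and bounded: "\<And>z. z \<in> space N \<Longrightarrow> \<bar>g z\<bar> \<le> K"
begin

lemma integral_comp: "(\<integral>\<omega>. g (W i \<omega>) \<partial>M) = (\<integral>z. g z \<partial>P)"
  using integral_distr[OF measurable_W g, of i] by (simp add: law)

lemma indep_vars_comp: "indep_vars (\<lambda>_. borel) (\<lambda>i \<omega>. g (W i \<omega>)) UNIV"
  using indep_vars_compose2[OF indep, of "\<lambda>_. g"] by simp

lemma distr_comp: "distr M borel (\<lambda>\<omega>. g (W i \<omega>)) = distr P borel g"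
  using distr_distr[OF g measurable_W, of i] by (simp add: law comp_def)

lemma bounded_comp: "\<omega> \<in> space M \<Longrightarrow> \<bar>g (W i \<omega>)\<bar> \<le> K"
  by (rule bounded) (rule measurable_space[OF measurable_W])

lemma integrable_comp_mult: "integrable M (\<lambda>\<omega>. g (W i \<omega>) * g (W j \<omega>))"
proof (rule integrable_const_bound[where B = "K * K"])
  show "AE \<omega> in M. norm (g (W i \<omega>) * g (W j \<omega>)) \<le> K * K"
    by (intro AE_I2)
      (auto simp: abs_mult intro!: mult_mono bounded_comp order_trans[OF abs_ge_zero bounded_comp])
qed simp

lemma integrable_comp: "integrable M (\<lambda>\<omega>. g (W i \<omega>))"
  by (rule integrable_const_bound[where B = K]) (auto intro: AE_I2 bounded_comp)

lemma integral_comp_mult: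
  "(\<integral>\<omega>. g (W i \<omega>) * g (W j \<omega>) \<partial>M) = (if i = j then \<integral>z. (g z)\<^sup>2 \<partial>P else (\<integral>z. g z \<partial>P)\<^sup>2)"
proof (cases "i = j")
  case True
  have "\<bar>(g z)\<^sup>2\<bar> \<le> K\<^sup>2" if "z \<in> space N" for z
    using power_mono[OF bounded[OF that] abs_ge_zero, of 2] by simp
  then show ?thesis
    using True iid_sequence.integral_comp[OF iid_sequence_axioms, of "\<lambda>z. (g z)\<^sup>2" "K\<^sup>2" i]
    by (simp add: power2_eq_square)
next
  case False
  have "(\<integral>\<omega>. (\<Prod>k\<in>{i, j}. g (W k \<omega>)) \<partial>M) = (\<Prod>k\<in>{i, j}. \<integral>\<omega>. g (W k \<omega>) \<partial>M)"
    by (intro indep_vars_lebesgue_integral indep_vars_subset[OF indep_vars_comp] integrable_comp)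
      auto
  then show ?thesis
    using False by (simp add: integral_comp power2_eq_square)
qed

lemma integrable_sample_mean: "integrable M (\<lambda>\<omega>. sample_mean n (\<lambda>i. g (W i \<omega>)))"
  unfolding sample_mean_def
  by (intro integrable_divide Bochner_Integration.integrable_sum integrable_comp)

lemma integrable_sample_variance: "integrable M (\<lambda>\<omega>. sample_variance n (\<lambda>i. g (W i \<omega>)))"
  unfolding sample_variance_eq_double_sum
  by (intro integrable_divide Bochner_Integration.integrable_diff Bochner_Integration.integrable_sum
      integrable_comp_mult)

lemma expectation_sample_mean:
  assumes "n > 0"
  shows "expectation (\<lambda>\<omega>. sample_mean n (\<lambda>i. g (W i \<omega>))) = (\<integral>z. g z \<partial>P)"
  using assms by (simp add: sample_mean_def integral_sum integrable_comp integral_comp)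

lemma expectation_sample_variance:
  assumes "n \<ge> 2"
  shows "expectation (\<lambda>\<omega>. sample_variance n (\<lambda>i. g (W i \<omega>)))
    = (\<integral>z. (g z)\<^sup>2 \<partial>P) - (\<integral>z. g z \<partial>P)\<^sup>2"
proof -
  define m1 m2 where "m1 = (\<integral>z. g z \<partial>P)" and "m2 = (\<integral>z. (g z)\<^sup>2 \<partial>P)"
  have row: "(\<Sum>j<n. if i = j then m2 else m1\<^sup>2) = m2 + (real n - 1) * m1\<^sup>2" if "i < n" for i
  proof -
    have "(\<Sum>j<n. if i = j then m2 else m1\<^sup>2) = (\<Sum>j<n. m1\<^sup>2 + (if i = j then m2 - m1\<^sup>2 else 0))"
      by (intro sum.cong) auto
    also have "\<dots> = real n * m1\<^sup>2 + (m2 - m1\<^sup>2)"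
      using that by (simp add: sum.distrib)
    finally show ?thesis
      by (simp add: algebra_simps)
  qed
  have "expectation (\<lambda>\<omega>. sample_variance n (\<lambda>i. g (W i \<omega>)))
      = ((\<Sum>i<n. m2) - (\<Sum>i<n. \<Sum>j<n. if i = j then m2 else m1\<^sup>2) / real n) / (real n - 1)"
    unfolding sample_variance_eq_double_sum m1_def m2_def
    by (simp add: integral_sum integral_diff integrable_sum integrable_comp_mult integral_comp_mult)
  also have "\<dots> = (real n * m2 - (m2 + (real n - 1) * m1\<^sup>2)) / (real n - 1)"
    using assms by (simp add: row)
  also have "\<dots> = m2 - m1\<^sup>2"
    using assms by (simp add: field_simps)
  finally show ?thesis
    by (simp add: m1_def m2_def)
qed

lemma strong_law:
  "AE \<omega> in M. (\<lambda>n. sample_mean n (\<lambda>i. g (W i \<omega>))) \<longlonglongrightarrow> (\<integral>z. g z \<partial>P)"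
proof -
  define \<mu> where "\<mu> = (\<integral>z. g z \<partial>P)"
  define c where "c = \<bar>K\<bar> + 1"
  have c: "c > 0" and bounded_c: "\<omega> \<in> space M \<Longrightarrow> g (W i \<omega>) \<in> {-c..c}" for i \<omega>
    using bounded_comp[of \<omega> i] by (auto simp: c_def abs_le_iff)
  \<comment> \<open>Hoeffding's bound is summable in \<open>n\<close>, so Borel--Cantelli applies to each tolerance.\<close>
  have eventually_close: "AE \<omega> in M. \<forall>\<^sub>F n in sequentially. \<bar>sample_mean n (\<lambda>i. g (W i \<omega>)) - \<mu>\<bar> < e"
    if e: "e > 0" for e
  proof -
    define A where "A n = {\<omega>\<in>space M. \<bar>(\<Sum>i<n. g (W i \<omega>)) / real n - \<mu>\<bar> \<ge> e}" for n
    have A_sets [measurable]: "A n \<in> sets M" for n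
      unfolding A_def by measurable
    define r where "r = exp (-2 * e\<^sup>2 / (2 * c)\<^sup>2)"
    have "r < 1"
      using e c by (simp add: r_def divide_neg_pos)
    then have summable: "summable (\<lambda>n. 2 * r ^ n)"
      by (simp add: r_def)
    have Hoeffding: "prob (A n) \<le> 2 * r ^ n" if "n \<ge> 1" for n
    proof -
      interpret Hoeffding_ineq_iid M "{..<n}" "\<lambda>i \<omega>. g (W i \<omega>)" "\<lambda>\<omega>. g (W 0 \<omega>)" "-c" c \<mu>
      proof unfold_locales
        show "indep_vars (\<lambda>_. borel) (\<lambda>i \<omega>. g (W i \<omega>)) {..<n}"
          using indep_vars_subset[OF indep_vars_comp] by auto
        show "AE \<omega> in M. g (W 0 \<omega>) \<in> {-c..c}"
          by (intro AE_I2 bounded_c)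
      qed (simp_all add: distr_comp \<mu>_def integral_comp)
      have "prob (A n) \<le> 2 * exp (-2 * real n * e\<^sup>2 / (c - - c)\<^sup>2)"
        using Hoeffding_ineq_abs_ge'[of e] e c that
        unfolding A_def by (simp add: lessThan_empty_iff)
      also have "exp (-2 * real n * e\<^sup>2 / (c - - c)\<^sup>2) = r ^ n"
        by (simp add: r_def flip: exp_of_nat_mult)
      finally show ?thesis .
    qed
    have "summable (\<lambda>n. measure M (A n))"
      by (rule summable_comparison_test'[OF summable, of 1]) (simp add: Hoeffding)
    then have "AE \<omega> in M. \<forall>\<^sub>F n in sequentially. \<omega> \<in> space M - A n"
      by (intro borel_cantelli_AE1) (auto simp: less_top[symmetric])
    then show ?thesis
      by (rule AE_mp) (auto intro!: AE_I2 elim!: eventually_mono simp: A_def sample_mean_def not_le)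
  qed
  have "AE \<omega> in M. \<forall>k::nat. \<forall>\<^sub>F n in sequentially.
      \<bar>sample_mean n (\<lambda>i. g (W i \<omega>)) - \<mu>\<bar> < inverse (real (Suc k))"
    unfolding AE_all_countable by (intro allI eventually_close) simp
  then show ?thesis
  proof (rule AE_mp, intro AE_I2 impI)
    fix \<omega>
    assume close: "\<forall>k::nat. \<forall>\<^sub>F n in sequentially.
      \<bar>sample_mean n (\<lambda>i. g (W i \<omega>)) - \<mu>\<bar> < inverse (real (Suc k))"
    show "(\<lambda>n. sample_mean n (\<lambda>i. g (W i \<omega>))) \<longlonglongrightarrow> (\<integral>z. g z \<partial>P)"
      unfolding \<mu>_def[symmetric]
    proof (rule tendstoI)
      fix e :: real
      assume "e > 0"
      then obtain k where k: "inverse (real (Suc k)) < e"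
        using reals_Archimedean by blast
      show "\<forall>\<^sub>F n in sequentially. dist (sample_mean n (\<lambda>i. g (W i \<omega>))) \<mu> < e"
        using close[rule_format, of k] by eventually_elim (use k in \<open>simp add: dist_real_def\<close>)
    qed
  qed
qed

lemma strong_law_sample_variance:
  "AE \<omega> in M. (\<lambda>n. sample_variance n (\<lambda>i. g (W i \<omega>)))
     \<longlonglongrightarrow> (\<integral>z. (g z)\<^sup>2 \<partial>P) - (\<integral>z. g z \<partial>P)\<^sup>2"
proof -
  have "\<bar>(g z)\<^sup>2\<bar> \<le> K\<^sup>2" if "z \<in> space N" for z
    using power_mono[OF bounded[OF that] abs_ge_zero, of 2] by simp
  then have "AE \<omega> in M. (\<lambda>n. sample_mean n (\<lambda>i. (g (W i \<omega>))\<^sup>2)) \<longlonglongrightarrow> (\<integral>z. (g z)\<^sup>2 \<partial>P)"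
    by (intro iid_sequence.strong_law[OF iid_sequence_axioms]) auto
  with strong_law show ?thesis
    by eventually_elim (rule tendsto_sample_variance)
qed

end

end

lemma integral_uniform_threshold:
  fixes f :: "bool \<Rightarrow> real"
  assumes "c \<in> {0..1}"
  shows "(\<integral>\<xi>. f (\<xi> \<le> c) \<partial>uniform_measure lborel {0..1}) = c * f True + (1 - c) * f False"
proof -
  define U where "U = uniform_measure lborel {0..1::real}"
  interpret U: prob_space U
    unfolding U_def by (intro prob_space_uniform_measure) auto
  have "measure U {..c} = measure lborel ({..c} \<inter> {0..1}) / measure lborel {0..1::real}"
    unfolding U_def by (subst measure_uniform_measure) auto
  also have "{..c} \<inter> {0..1} = {0..c}"
    using assms by auto
  finally have measure_U: "measure U {..c} = c"
    using assms by simp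
  have indicator_integrable: "integrable U (indicator {..c} :: real \<Rightarrow> real)"
    by (rule U.integrable_const_bound[where B = 1]) (auto simp: U_def)
  have "(\<integral>\<xi>. f (\<xi> \<le> c) \<partial>U) = (\<integral>\<xi>. f False + (f True - f False) * indicator {..c} \<xi> \<partial>U)"
    by (intro Bochner_Integration.integral_cong) (auto simp: indicator_def)
  also have "\<dots> = f False + (f True - f False) * c"
    using indicator_integrable measure_U by (simp add: U.prob_space) (simp add: U_def)
  finally show ?thesis
    by (simp add: U_def algebra_simps)
qed

text \<open>The variance of the corrected reward given the true reward \<open>r \<in> {0, 1}\<close>, written
  affinely in \<open>r\<close> so that it commutes with taking expectations.\<close>
definition noise_variance :: "('q \<Rightarrow> real) \<Rightarrow> ('q \<Rightarrow> real) \<Rightarrow> 'q \<Rightarrow> real \<Rightarrow> real" where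
  "noise_variance rp rm q r =
     (r * rm q * (1 - rm q) + (1 - r) * rp q * (1 - rp q)) / (1 - rp q - rm q)\<^sup>2"

lemma tendsto_noise_variance [tendsto_intros]:
  "(f \<longlongrightarrow> r) F \<Longrightarrow> ((\<lambda>x. noise_variance rp rm q (f x)) \<longlongrightarrow> noise_variance rp rm q r) F"
  unfolding noise_variance_def divide_inverse by (intro tendsto_intros)

lemma (in prob_space) integrable_noise_variance:
  "integrable M X \<Longrightarrow> integrable M (\<lambda>\<omega>. noise_variance rp rm q (X \<omega>))"
  by (simp add: noise_variance_def)

lemma (in prob_space) expectation_noise_variance:
  "integrable M X \<Longrightarrow>
    expectation (\<lambda>\<omega>. noise_variance rp rm q (X \<omega>)) = noise_variance rp rm q (expectation X)"
  by (simp add: noise_variance_def prob_space algebra_simps Bochner_Integration.integral_diff)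

lemma Z_est_eq:
  "Z_est rs rp rm q n os xs =
     sample_variance n (\<lambda>i. corrected_reward rs rp rm q (os i) (xs i))
     - noise_variance rp rm q (sample_mean n (\<lambda>i. corrected_reward rs rp rm q (os i) (xs i)))"
  by (simp add: Z_est_def Let_def sample_variance_def sample_mean_def noise_variance_def
      diff_divide_distrib add_divide_distrib)

lemma corrected_reward_bounded:
  assumes "rs q x \<in> {0, 1}" "rp q \<in> {0..1}" "rm q \<in> {0..1}"
  shows "\<bar>corrected_reward rs rp rm q x \<xi>\<bar> \<le> 1 / \<bar>1 - rp q - rm q\<bar>"
proof -
  have "\<bar>noisy_reward rs rp rm q x \<xi> - rp q\<bar> \<le> 1"
    using assms by (auto simp: noisy_reward_def)
  then show ?thesis
    by (simp add: corrected_reward_def abs_divide divide_right_mono)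
qed

lemma measurable_corrected_reward [measurable]:
  "(\<lambda>z. corrected_reward rs rp rm q (fst z) (snd z))
     \<in> borel_measurable (count_space (UNIV :: 'o::countable set) \<Otimes>\<^sub>M borel)"
  unfolding corrected_reward_def noisy_reward_def by measurable

lemma
  assumes "rs q x \<in> {0, 1}" "rp q \<in> {0..1}" "rm q \<in> {0..1}" "1 - rp q - rm q \<noteq> 0"
  shows integral_corrected_reward:
      "(\<integral>\<xi>. corrected_reward rs rp rm q x \<xi> \<partial>uniform_measure lborel {0..1}) = rs q x"
    and integral_corrected_reward_square:
      "(\<integral>\<xi>. (corrected_reward rs rp rm q x \<xi>)\<^sup>2 \<partial>uniform_measure lborel {0..1})
         = rs q x + noise_variance rp rm q (rs q x)"
proof -
  define d where "d = 1 - rp q - rm q"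
  define \<theta> where "\<theta> = (if rs q x = 1 then 1 - rm q else rp q)"
  have \<theta>: "\<theta> \<in> {0..1}"
    using assms by (auto simp: \<theta>_def)
  have d: "d \<noteq> 0" and rs: "rs q x = 0 \<or> rs q x = 1"
    using assms by (auto simp: d_def)
  have "corrected_reward rs rp rm q x \<xi> = ((if \<xi> \<le> \<theta> then 1 else 0) - rp q) / d" for \<xi>
    using rs by (auto simp: corrected_reward_def noisy_reward_def \<theta>_def d_def)
  then have integral_eq: "(\<integral>\<xi>. f (corrected_reward rs rp rm q x \<xi>) \<partial>uniform_measure lborel {0..1})
      = \<theta> * f ((1 - rp q) / d) + (1 - \<theta>) * f (- rp q / d)" for f
    using integral_uniform_threshold[OF \<theta>, of "\<lambda>b. f (((if b then 1 else 0) - rp q) / d)"] by simp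
  have "(\<integral>\<xi>. corrected_reward rs rp rm q x \<xi> \<partial>uniform_measure lborel {0..1}) = (\<theta> - rp q) / d"
    using integral_eq[of "\<lambda>y. y"] d by (simp add: field_simps)
  also have "\<dots> = rs q x"
    using rs d by (auto simp: \<theta>_def d_def)
  finally show "(\<integral>\<xi>. corrected_reward rs rp rm q x \<xi> \<partial>uniform_measure lborel {0..1}) = rs q x" .
  have "(\<integral>\<xi>. (corrected_reward rs rp rm q x \<xi>)\<^sup>2 \<partial>uniform_measure lborel {0..1})
      = (\<theta> * (1 - \<theta>) + (\<theta> - rp q)\<^sup>2) / d\<^sup>2"
    using integral_eq[of "\<lambda>y. y\<^sup>2"] d by (simp add: field_simps power2_eq_square)
  also have "\<dots> = rs q x + noise_variance rp rm q (rs q x)"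
  proof -
    have "\<theta> - rp q = rs q x * d" and "\<theta> * (1 - \<theta>) = noise_variance rp rm q (rs q x) * d\<^sup>2"
      using rs d by (auto simp: \<theta>_def d_def noise_variance_def)
    then show ?thesis
      using rs d by (auto simp: add_divide_distrib power_mult_distrib)
  qed
  finally show "(\<integral>\<xi>. (corrected_reward rs rp rm q x \<xi>)\<^sup>2 \<partial>uniform_measure lborel {0..1})
      = rs q x + noise_variance rp rm q (rs q x)" .
qed

lemma
  fixes rs :: "'q \<Rightarrow> 'o::countable \<Rightarrow> real" and \<pi> :: "'q \<Rightarrow> 'o pmf"
  assumes binary: "\<And>x. rs q x \<in> {0, 1}"
    and rp: "rp q \<in> {0..1}" and rm: "rm q \<in> {0..1}" and denom: "1 - rp q - rm q \<noteq> 0"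
  shows integral_corrected_reward_pair:
      "(\<integral>z. corrected_reward rs rp rm q (fst z) (snd z)
          \<partial>(measure_pmf (\<pi> q) \<Otimes>\<^sub>M uniform_measure lborel {0..1})) = p_pol rs \<pi> q"
    and integral_corrected_reward_square_pair:
      "(\<integral>z. (corrected_reward rs rp rm q (fst z) (snd z))\<^sup>2
          \<partial>(measure_pmf (\<pi> q) \<Otimes>\<^sub>M uniform_measure lborel {0..1}))
         = p_pol rs \<pi> q + noise_variance rp rm q (p_pol rs \<pi> q)"
proof -
  define U where "U = uniform_measure lborel {0..1::real}"
  interpret U: prob_space U
    unfolding U_def by (intro prob_space_uniform_measure) auto
  interpret pair_prob_space "measure_pmf (\<pi> q)" U ..
  define h where "h z = corrected_reward rs rp rm q (fst z) (snd z)" for z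
  define K where "K = 1 / \<bar>1 - rp q - rm q\<bar>"
  have sets_eq: "sets (measure_pmf (\<pi> q) \<Otimes>\<^sub>M U) = sets (count_space UNIV \<Otimes>\<^sub>M borel)"
    unfolding U_def by (intro sets_pair_measure_cong sets_measure_pmf_count_space) simp
  have h_measurable [measurable]: "h \<in> borel_measurable (measure_pmf (\<pi> q) \<Otimes>\<^sub>M U)"
    unfolding measurable_cong_sets[OF sets_eq refl] h_def[abs_def]
    by (rule measurable_corrected_reward)
  have h_bounded: "\<bar>h z\<bar> \<le> K" for z
    unfolding h_def K_def using binary rp rm by (rule corrected_reward_bounded)
  have "integrable (measure_pmf (\<pi> q) \<Otimes>\<^sub>M U) h"
    using h_bounded by (intro P.integrable_const_bound[where B = K]) auto
  then have "(\<integral>z. h z \<partial>(measure_pmf (\<pi> q) \<Otimes>\<^sub>M U)) = (\<integral>x. (\<integral>\<xi>. h (x, \<xi>) \<partial>U) \<partial>\<pi> q)"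
    by (rule integral_fst'[symmetric])
  also have "\<dots> = p_pol rs \<pi> q"
    using binary rp rm denom by (simp add: h_def U_def integral_corrected_reward p_pol_def)
  finally show "(\<integral>z. corrected_reward rs rp rm q (fst z) (snd z)
      \<partial>(measure_pmf (\<pi> q) \<Otimes>\<^sub>M uniform_measure lborel {0..1})) = p_pol rs \<pi> q"
    by (simp add: h_def U_def)
  have "integrable (measure_pmf (\<pi> q) \<Otimes>\<^sub>M U) (\<lambda>z. (h z)\<^sup>2)"
    using power_mono[OF h_bounded abs_ge_zero, of _ 2]
    by (intro P.integrable_const_bound[where B = "K\<^sup>2"]) auto
  then have "(\<integral>z. (h z)\<^sup>2 \<partial>(measure_pmf (\<pi> q) \<Otimes>\<^sub>M U)) = (\<integral>x. (\<integral>\<xi>. (h (x, \<xi>))\<^sup>2 \<partial>U) \<partial>\<pi> q)"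
    by (rule integral_fst'[symmetric])
  also have "\<dots> = (\<integral>x. rs q x + noise_variance rp rm q (rs q x) \<partial>\<pi> q)"
    using binary rp rm denom by (simp add: h_def U_def integral_corrected_reward_square)
  also have "\<dots> = p_pol rs \<pi> q + noise_variance rp rm q (p_pol rs \<pi> q)"
  proof -
    have "integrable (measure_pmf (\<pi> q)) (rs q)"
    proof (intro measure_pmf.integrable_const_bound[where B = 1] AE_I2)
      show "norm (rs q x) \<le> 1" for x
        using binary[of x] by auto
    qed simp
    then show ?thesis
      by (simp add: p_pol_def measure_pmf.integrable_noise_variance
          measure_pmf.expectation_noise_variance)
  qed
  finally show "(\<integral>z. (corrected_reward rs rp rm q (fst z) (snd z))\<^sup>2
      \<partial>(measure_pmf (\<pi> q) \<Otimes>\<^sub>M uniform_measure lborel {0..1}))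
      = p_pol rs \<pi> q + noise_variance rp rm q (p_pol rs \<pi> q)"
    by (simp add: h_def U_def)
qed

theorem proposition4:
  fixes M :: "'w measure"
    and rs :: "'q \<Rightarrow> 'o::countable \<Rightarrow> real"
    and rp rm :: "'q \<Rightarrow> real"
    and \<pi> :: "'q \<Rightarrow> 'o pmf"
    and q :: 'q
    and Os :: "nat \<Rightarrow> 'w \<Rightarrow> 'o"
    and \<Xi> :: "nat \<Rightarrow> 'w \<Rightarrow> real"
  assumes binary: "\<And>q' x. rs q' x \<in> {0, 1}"
    and rp_range: "\<And>q'. rp q' \<in> {0..1}"
    and rm_range: "\<And>q'. rm q' \<in> {0..1}"
    and denom: "1 - rp q - rm q \<noteq> 0"
    and M: "prob_space M"
    and indep: "prob_space.indep_vars M (\<lambda>_. count_space UNIV \<Otimes>\<^sub>M borel)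
                  (\<lambda>i \<omega>. (Os i \<omega>, \<Xi> i \<omega>)) UNIV"
    and distr: "\<And>i. distr M (count_space UNIV \<Otimes>\<^sub>M borel) (\<lambda>\<omega>. (Os i \<omega>, \<Xi> i \<omega>))
                  = measure_pmf (\<pi> q) \<Otimes>\<^sub>M uniform_measure lborel {0..1}"
  shows "(\<forall>n\<ge>2.
           prob_space.expectation M (\<lambda>\<omega>. Z_est rs rp rm q n (\<lambda>i. Os i \<omega>) (\<lambda>i. \<Xi> i \<omega>))
             = p_pol rs \<pi> q * (1 - p_pol rs \<pi> q)
         \<and> p_pol rs \<pi> q * (1 - p_pol rs \<pi> q) = measure_pmf.variance (\<pi> q) (rs q))
         \<and> (AE \<omega> in M. (\<lambda>n. Z_est rs rp rm q n (\<lambda>i. Os i \<omega>) (\<lambda>i. \<Xi> i \<omega>))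
           \<longlonglongrightarrow> p_pol rs \<pi> q * (1 - p_pol rs \<pi> q))"
proof -
  define P where "P = measure_pmf (\<pi> q) \<Otimes>\<^sub>M uniform_measure lborel {0..1::real}"
  define h where "h z = corrected_reward rs rp rm q (fst z) (snd z)" for z
  define p where "p = p_pol rs \<pi> q"
  interpret iid_sequence M "count_space UNIV \<Otimes>\<^sub>M borel" "\<lambda>i \<omega>. (Os i \<omega>, \<Xi> i \<omega>)" P
    using M indep distr by (simp add: iid_sequence_def iid_sequence_axioms_def P_def)
  have h: "h \<in> borel_measurable (count_space UNIV \<Otimes>\<^sub>M borel)"
    "\<And>z. \<bar>h z\<bar> \<le> 1 / \<bar>1 - rp q - rm q\<bar>"
    using binary rp_range rm_range by (simp_all add: h_def[abs_def] corrected_reward_bounded)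
  have moments: "(\<integral>z. h z \<partial>P) = p" "(\<integral>z. (h z)\<^sup>2 \<partial>P) = p + noise_variance rp rm q p"
    using binary rp_range rm_range denom
    by (simp_all add: P_def h_def p_def integral_corrected_reward_pair
        integral_corrected_reward_square_pair)
  let ?mean = "\<lambda>n \<omega>. sample_mean n (\<lambda>i. h (Os i \<omega>, \<Xi> i \<omega>))"
  let ?var = "\<lambda>n \<omega>. sample_variance n (\<lambda>i. h (Os i \<omega>, \<Xi> i \<omega>))"
  have Z_eq: "Z_est rs rp rm q n (\<lambda>i. Os i \<omega>) (\<lambda>i. \<Xi> i \<omega>)
      = ?var n \<omega> - noise_variance rp rm q (?mean n \<omega>)" for n \<omega>
    by (simp add: Z_est_eq h_def)
  have "expectation (\<lambda>\<omega>. Z_est rs rp rm q n (\<lambda>i. Os i \<omega>) (\<lambda>i. \<Xi> i \<omega>)) = p * (1 - p)"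
    if "n \<ge> 2" for n
  proof -
    have "expectation (\<lambda>\<omega>. Z_est rs rp rm q n (\<lambda>i. Os i \<omega>) (\<lambda>i. \<Xi> i \<omega>))
        = expectation (?var n) - noise_variance rp rm q (expectation (?mean n))"
      unfolding Z_eq using integrable_sample_variance[OF h] integrable_sample_mean[OF h]
      by (simp add: integrable_noise_variance expectation_noise_variance)
    also have "\<dots> = p * (1 - p)"
      using that
      by (simp add: expectation_sample_variance[OF h] expectation_sample_mean[OF h] moments)
        (simp add: power2_eq_square algebra_simps)
    finally show ?thesis .
  qed
  moreover have "p * (1 - p) = measure_pmf.variance (\<pi> q) (rs q)"
    using binary by (simp add: p_def p_pol_def measure_pmf.variance_binary)
  moreover have "AE \<omega> in M. (\<lambda>n. Z_est rs rp rm q n (\<lambda>i. Os i \<omega>) (\<lambda>i. \<Xi> i \<omega>))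
      \<longlonglongrightarrow> p * (1 - p)"
    using strong_law[OF h] strong_law_sample_variance[OF h]
  proof eventually_elim
    case (elim \<omega>)
    then have "(\<lambda>n. ?var n \<omega> - noise_variance rp rm q (?mean n \<omega>))
        \<longlonglongrightarrow> (p + noise_variance rp rm q p - p\<^sup>2) - noise_variance rp rm q p"
      by (intro tendsto_intros) (simp_all add: moments)
    then show ?case
      by (simp add: Z_eq power2_eq_square algebra_simps)
  qed
  ultimately show ?thesis
    by (simp add: p_def)
qed

end
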